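(* Consider an $\mathbb{H}_{2n+1}$-structure on $\mathbb{P}V$ such that $T$ fixes every point of the boundary hyperplane $\mathbb{P}V'$. For a point $o$ in the open orbit, let $v(o)$ denote the unique point of $\overline{\mathbb{I}\cdot o}\setminus\mathbb{I}\cdot o$. Then $v(o)$ does not depend on the choice of $o$ in the open orbit.
   Context: Work over $\mathbb{C}$, $n\ge1$. The Heisenberg group $\mathbb{H}_{2n+1}$ is $\mathbb{W}\times\mathbb{C}$ ($\mathbb{W}$ a $2n$-dimensional space with non-degenerate skew form $\omega$) with law $(w_1,t_1)(w_2,t_2)=(w_1+w_2,t_1+t_2+\tfrac12\omega(w_1,w_2))$; $T=(0,1)$, and $\mathbb{I}=\mathbb{C}T$ is its center. $V\cong\mathbb{C}^{2n+2}$. An $\mathbb{H}_{2n+1}$-structure on $\mathbb{P}V$ is an effective algebraic action with a dense open orbit; its boundary (the complement of the open orbit) is a hyperplane $\mathbb{P}V'$. For $o$ in the open orbit, $\overline{\mathbb{I}\cdot o}$ is a projective line and $\overline{\mathbb{I}\cdot o}\setminus\mathbb{I}\cdot o$ is a single point. *)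

theory Defs
  imports "HOL-Analysis.Analysis"
begin

definition hmul :: "(complex^'w \<Rightarrow> complex^'w \<Rightarrow> complex)
    \<Rightarrow> (complex^'w) \<times> complex \<Rightarrow> (complex^'w) \<times> complex \<Rightarrow> (complex^'w) \<times> complex" where
  "hmul \<omega> g h = (fst g + fst h, snd g + snd h + \<omega> (fst g) (fst h) / 2)"

definition symplectic_form :: "(complex^'w \<Rightarrow> complex^'w \<Rightarrow> complex) \<Rightarrow> bool" where
  "symplectic_form \<omega> \<longleftrightarrow>
     (\<forall>a b x y z. \<omega> (a *s x + b *s y) z = a * \<omega> x z + b * \<omega> y z) \<and>
     (\<forall>x y. \<omega> x y = - \<omega> y x) \<and>
     (\<forall>x. (\<forall>y. \<omega> x y = 0) \<longrightarrow> x = 0)"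

inductive_set poly_gen :: "('a \<Rightarrow> complex) set \<Rightarrow> ('a \<Rightarrow> complex) set" for B where
  gen: "f \<in> B \<Longrightarrow> f \<in> poly_gen B"
| const: "(\<lambda>x. c) \<in> poly_gen B"
| add: "f \<in> poly_gen B \<Longrightarrow> g \<in> poly_gen B \<Longrightarrow> (\<lambda>x. f x + g x) \<in> poly_gen B"
| mult: "f \<in> poly_gen B \<Longrightarrow> g \<in> poly_gen B \<Longrightarrow> (\<lambda>x. f x * g x) \<in> poly_gen B"

definition vpoly :: "(complex^'v \<Rightarrow> complex) set" where
  "vpoly = poly_gen (range (\<lambda>i x. x $ i))"

definition hpoly :: "((complex^'w) \<times> complex \<Rightarrow> complex) set" where
  "hpoly = poly_gen (range (\<lambda>i g. fst g $ i) \<union> {\<lambda>g. snd g})"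

text \<open>A point of P V is a complex line through the origin.\<close>
definition pline :: "complex^'v \<Rightarrow> (complex^'v) set" where
  "pline u = {c *s u | c. True}"

definition PV :: "(complex^'v) set set" where
  "PV = {pline u | u. u \<noteq> 0}"

text \<open>Zariski closure in P V: points at which every polynomial vanishing on
  (the cone over) S vanishes. For cones the vanishing ideal is homogeneous, so
  this is the projective Zariski closure.\<close>
definition zcl :: "(complex^'v) set set \<Rightarrow> (complex^'v) set set" where
  "zcl S = {pline u | u. u \<noteq> 0 \<and>
      (\<forall>p\<in>vpoly. (\<forall>L\<in>S. \<forall>x\<in>L. p x = 0) \<longrightarrow> p u = 0)}"

definition zopen :: "(complex^'v) set set \<Rightarrow> bool" where
  "zopen U \<longleftrightarrow> U \<subseteq> PV \<and> zcl (PV - U) = PV - U"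

definition pact :: "('g \<Rightarrow> complex^'v^'v) \<Rightarrow> 'g \<Rightarrow> (complex^'v) set \<Rightarrow> (complex^'v) set" where
  "pact \<rho> g L = (\<lambda>x. \<rho> g *v x) ` L"

text \<open>An H_{2n+1}-structure on P V: an effective algebraic action (given by an
  algebraic representation rho : H -> GL(V)) with a dense Zariski-open orbit Omega.\<close>
definition heis_structure ::
  "(complex^'w \<Rightarrow> complex^'w \<Rightarrow> complex) \<Rightarrow> ((complex^'w) \<times> complex \<Rightarrow> complex^'v^'v)
     \<Rightarrow> (complex^'v) set set \<Rightarrow> bool" where
  "heis_structure \<omega> \<rho> \<Omega> \<longleftrightarrow>
     \<rho> (0, 0) = mat 1 \<and>
     (\<forall>g h. \<rho> (hmul \<omega> g h) = \<rho> g ** \<rho> h) \<and>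
     (\<forall>i j. (\<lambda>g. \<rho> g $ i $ j) \<in> hpoly) \<and>
     (\<forall>g. (\<forall>L\<in>PV. pact \<rho> g L = L) \<longrightarrow> g = (0, 0)) \<and>
     (\<exists>x0\<in>PV. \<Omega> = {pact \<rho> g x0 | g. True}) \<and>
     zopen \<Omega> \<and> zcl \<Omega> = PV"

text \<open>The orbit of the centre I = C T, T = (0,1), through o.\<close>
definition center_orbit :: "((complex^'w) \<times> complex \<Rightarrow> complex^'v^'v) \<Rightarrow> (complex^'v) set \<Rightarrow> (complex^'v) set set" where
  "center_orbit \<rho> q = {pact \<rho> (0, t) q | t. True}"

end

theory Submission
  imports Defs "HOL-Computational_Algebra.Polynomial"
begin

(* The centre acts through a one-parameter group with polynomial entries, hence through
   exp (t N) with N nilpotent, and N commutes with the whole action. A boundary point is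
   fixed by exp N, so it lies in ker N: the open orbit is exactly the set of [u] with N u ~= 0.
   Since the open orbit is one orbit, the nilpotency order of N is constant on it, which
   forces N^2 = 0. The centre orbit of [u] is then the affine line {[u + t N u]}, whose
   closure adds the single point [N u]. Finally, on ker N (which contains im N) the
   translations by W commute, so by Kolchin's theorem they fix a nonzero vector of im N.
   As N intertwines the action, this makes [N u] a fixed point of the group, and since the
   open orbit is a single orbit, [N u] does not depend on [u]. *)

section \<open>Nilpotent generators of polynomial one-parameter groups\<close>

fun matpow :: "'a::semiring_1^'n^'n \<Rightarrow> nat \<Rightarrow> 'a^'n^'n" where
  "matpow M 0 = mat 1"
| "matpow M (Suc k) = M ** matpow M k"

lemma matpow_add: "matpow M (j + k) = matpow M j ** matpow M k"
  by (induction j) (simp_all add: matrix_mul_assoc)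

lemma matpow_Suc_right: "matpow M (Suc k) = matpow M k ** M"
  using matpow_add[of M k 1] by simp

lemma matpow_commute: "matpow M j ** matpow M k = matpow M k ** matpow M j"
  by (metis matpow_add add.commute)

lemma matpow_vanishes_above:
  assumes "matpow M r *v x = 0" "r \<le> k"
  shows "matpow M k *v x = 0"
  using assms matpow_add[of M "k - r" r] by (simp add: matrix_vector_mul_assoc[symmetric])

lemma matpow_last_nonzero:
  assumes "matpow M D = 0" "y \<noteq> 0"
  obtains k where "matpow M k *v y \<noteq> 0" "M *v (matpow M k *v y) = 0"
proof -
  obtain k where "\<forall>i\<le>k. matpow M i *v y \<noteq> 0" "matpow M (Suc k) *v y = 0"
    using ex_least_nat_less[of "\<lambda>k. matpow M k *v y = 0" D] assms by auto
  then show ?thesis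
    by (intro that) (simp_all add: matrix_vector_mul_assoc)
qed

lemma sum_matpow_truncate:
  assumes "matpow M r *v x = 0" "r \<le> m"
  shows "(\<Sum>k<m. c k *s (matpow M k *v x)) = (\<Sum>k<r. c k *s (matpow M k *v x))"
  by (rule sum.mono_neutral_right) (auto simp: assms(2) matpow_vanishes_above[OF assms(1)])

lemma vector_polyfun_eq_coeffs:
  fixes a b :: "nat \<Rightarrow> complex^'n"
  assumes "\<And>t. (\<Sum>k<m. t^k *s a k) = (\<Sum>k<m. t^k *s b k)" and "k < m"
  shows "a k = b k"
proof -
  obtain n where m: "m = Suc n" using \<open>k < m\<close> by (cases m) auto
  have "a k $ i = b k $ i" for i
  proof -
    have "\<forall>t. (\<Sum>j\<le>n. a j $ i * t^j) = (\<Sum>j\<le>n. b j $ i * t^j)"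
      using arg_cong[where f = "\<lambda>v. v $ i", OF assms(1)]
      by (simp add: m lessThan_Suc_atMost mult.commute)
    then show ?thesis
      using polyfun_eq_coeffs[of "\<lambda>j. a j $ i" n "\<lambda>j. b j $ i"] \<open>k < m\<close> m by auto
  qed
  then show ?thesis by (simp add: vec_eq_iff)
qed

lemma poly_matrix_vector_component:
  "((\<chi> i j. poly (P i j) t) *v x) $ i = poly (\<Sum>j\<in>UNIV. smult (x $ j) (P i j)) t"
  by (simp add: matrix_vector_mult_def poly_sum mult.commute)

lemma poly_matrix_expansion:
  fixes P :: "'n::finite \<Rightarrow> 'n \<Rightarrow> complex poly"
  assumes "\<And>i j. degree (P i j) < m"
  shows "(\<chi> i j. poly (P i j) t) *v x = (\<Sum>k<m. t^k *s ((\<chi> i j. coeff (P i j) k) *v x))"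
proof -
  have poly_P: "poly (P i j) t = (\<Sum>k<m. coeff (P i j) k * t^k)" for i j
    unfolding poly_altdef
    by (rule sum.mono_neutral_left) (use assms[of i j] in \<open>auto simp: coeff_eq_0\<close>)
  have "((\<chi> i j. poly (P i j) t) *v x) $ i = (\<Sum>k<m. t^k *s ((\<chi> i j. coeff (P i j) k) *v x)) $ i" for i
    by (simp add: matrix_vector_mult_def poly_P sum_distrib_left sum_distrib_right
        sum.swap[of _ UNIV] algebra_simps)
  then show ?thesis by (simp add: vec_eq_iff)
qed

lemma poly_shift_pderiv:
  fixes p q :: "complex poly"
  assumes "\<And>s. poly p (s + t) = poly q s"
  shows "poly (pderiv q) 0 = poly (pderiv p) t"
proof -
  have "q = p \<circ>\<^sub>p [:t, 1:]"
    using assms by (simp add: poly_eq_poly_eq_iff[symmetric] poly_pcompose fun_eq_iff add.commute)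
  then show ?thesis by (simp add: pderiv_pcompose poly_pcompose pderiv_pCons)
qed

text \<open>Differentiate \<open>U (s + t) = U s U t\<close> with respect to \<open>s\<close> at \<open>s = 0\<close>.\<close>
lemma poly_group_derivative:
  fixes P :: "'n::finite \<Rightarrow> 'n \<Rightarrow> complex poly"
  assumes hom: "\<And>s t. (\<chi> i j. poly (P i j) (s + t)) = (\<chi> i j. poly (P i j) s) ** (\<chi> i j. poly (P i j) t)"
  shows "(\<chi> i j. poly (pderiv (P i j)) t) *v x
           = (\<chi> i j. coeff (P i j) 1) *v ((\<chi> i j. poly (P i j) t) *v x)"
proof -
  define y where "y = (\<chi> i j. poly (P i j) t) *v x"
  have "((\<chi> i j. poly (pderiv (P i j)) t) *v x) $ i = ((\<chi> i j. coeff (P i j) 1) *v y) $ i" for i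
  proof -
    have "poly (\<Sum>j\<in>UNIV. smult (x $ j) (P i j)) (s + t) = poly (\<Sum>j\<in>UNIV. smult (y $ j) (P i j)) s" for s
      using arg_cong[where f = "\<lambda>A. (A *v x) $ i", OF hom[of s t]]
      by (simp add: y_def matrix_vector_mul_assoc[symmetric] poly_matrix_vector_component
          del: vec_lambda_beta)
    from poly_shift_pderiv[OF this] show ?thesis
      by (simp add: matrix_vector_mult_def higher_pderiv_sum[where n = 1, simplified]
          pderiv_smult poly_sum poly_0_coeff_0 coeff_sum coeff_pderiv mult.commute)
  qed
  then show ?thesis by (simp add: y_def vec_eq_iff)
qed

lemma poly_group_coeff_recursion:
  fixes P :: "'n::finite \<Rightarrow> 'n \<Rightarrow> complex poly"
  defines "C k \<equiv> (\<chi> i j. coeff (P i j) k)"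
  assumes hom: "\<And>s t. (\<chi> i j. poly (P i j) (s + t)) = (\<chi> i j. poly (P i j) s) ** (\<chi> i j. poly (P i j) t)"
    and deg: "\<And>i j. degree (P i j) < m" and "k < m"
  shows "of_nat (Suc k) *s (C (Suc k) *v x) = C 1 *v (C k *v x)"
proof (rule vector_polyfun_eq_coeffs[OF _ \<open>k < m\<close>])
  fix t
  have deg': "degree (pderiv (P i j)) < m" for i j
    using deg[of i j] by (simp add: degree_pderiv)
  have "(\<Sum>k<m. t^k *s (of_nat (Suc k) *s (C (Suc k) *v x)))
          = (\<chi> i j. poly (pderiv (P i j)) t) *v x"
    unfolding poly_matrix_expansion[OF deg']
    by (simp add: C_def coeff_pderiv vec_eq_iff matrix_vector_mult_def sum_distrib_left
        mult_ac del: of_nat_Suc)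
  also have "\<dots> = C 1 *v ((\<chi> i j. poly (P i j) t) *v x)"
    unfolding C_def by (rule poly_group_derivative[OF hom])
  also have "\<dots> = (\<Sum>k<m. t^k *s (C 1 *v (C k *v x)))"
    unfolding poly_matrix_expansion[OF deg] C_def by (simp add: vec.sum vec.scale)
  finally show "(\<Sum>k<m. t^k *s (of_nat (Suc k) *s (C (Suc k) *v x)))
                  = (\<Sum>k<m. t^k *s (C 1 *v (C k *v x)))" .
qed

text \<open>\<open>U t = exp (t M)\<close>, the exponential series being a finite sum since \<open>M\<^sup>D = 0\<close>.\<close>
definition nilpotent_generator :: "complex^'n^'n \<Rightarrow> nat \<Rightarrow> (complex \<Rightarrow> complex^'n^'n) \<Rightarrow> bool" where
  "nilpotent_generator M D U \<longleftrightarrow> matpow M D = 0 \<and>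
     (\<forall>m\<ge>D. \<forall>t x. U t *v x = (\<Sum>k<m. (t^k / fact k) *s (matpow M k *v x)))"

lemma polynomial_one_parameter_group_generator:
  fixes U :: "complex \<Rightarrow> complex^'n::finite^'n"
  assumes hom: "\<And>s t. U (s + t) = U s ** U t" and U0: "U 0 = mat 1"
    and entries_poly: "\<And>i j. \<exists>p. \<forall>t. U t $ i $ j = poly p t"
  shows "\<exists>M D. nilpotent_generator M D U"
proof -
  obtain P where P: "\<And>i j t. U t $ i $ j = poly (P i j) t"
    using entries_poly by metis
  have U_P: "U t = (\<chi> i j. poly (P i j) t)" for t
    by (simp add: vec_eq_iff P)
  define D where "D = Suc (Max (range (\<lambda>(i, j). degree (P i j))))"
  have deg: "degree (P i j) < m" if "D \<le> m" for i j m
  proof -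
    have "degree (P i j) \<le> Max (range (\<lambda>(i, j). degree (P i j)))"
      by (rule Max_ge) auto
    then show ?thesis using that by (simp add: D_def)
  qed
  define C where "C k = (\<chi> i j. coeff (P i j) k)" for k
  define M where "M = C 1"
  have C_matpow: "C k *v x = (1 / fact k) *s (matpow M k *v x)" for k x
  proof (induction k arbitrary: x)
    case 0
    have "C 0 = U 0" by (simp add: vec_eq_iff C_def P poly_0_coeff_0)
    then show ?case by (simp add: U0)
  next
    case (Suc k)
    have "of_nat (Suc k) *s (C (Suc k) *v x) = M *v (C k *v x)"
      unfolding C_def M_def
      by (rule poly_group_coeff_recursion[of P "max D (Suc k)"]) (use hom U_P deg in auto)
    then have "C (Suc k) *v x = (1 / of_nat (Suc k)) *s (M *v (C k *v x))"
      by (metis (no_types, lifting) vector_smult_assoc nonzero_divide_eq_eq of_nat_Suc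
          of_nat_neq_0 divide_eq_eq vector_smult_lid)
    then show ?case
      by (simp add: Suc vec.scale vector_smult_assoc matrix_vector_mul_assoc del: of_nat_Suc)
  qed
  have "matpow M D = 0"
  proof -
    have "C D = 0" by (simp add: C_def vec_eq_iff coeff_eq_0 deg)
    then have "matpow M D *v x = 0" for x
      using C_matpow[of D x] by simp
    then show ?thesis by (simp add: matrix_eq)
  qed
  moreover have "U t *v x = (\<Sum>k<m. (t^k / fact k) *s (matpow M k *v x))" if "D \<le> m" for m t x
    unfolding U_P poly_matrix_expansion[OF deg[OF that]]
    by (simp add: C_def[symmetric] C_matpow vector_smult_assoc)
  ultimately show ?thesis
    unfolding nilpotent_generator_def by blast
qed

lemma nilpotent_generator_apply:
  assumes "nilpotent_generator M D U" "matpow M r *v x = 0"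
  shows "U t *v x = (\<Sum>k<r. (t^k / fact k) *s (matpow M k *v x))"
proof -
  have "U t *v x = (\<Sum>k<max D r. (t^k / fact k) *s (matpow M k *v x))"
    using assms(1) unfolding nilpotent_generator_def by simp
  also have "\<dots> = (\<Sum>k<r. (t^k / fact k) *s (matpow M k *v x))"
    by (rule sum_matpow_truncate[OF assms(2)]) simp
  finally show ?thesis .
qed

lemma nilpotent_generator_fixes:
  assumes "nilpotent_generator M D U" "M *v x = 0"
  shows "U t *v x = x"
  using nilpotent_generator_apply[OF assms(1), of 1] assms(2) by simp

lemma nilpotent_generator_square_zero:
  assumes "nilpotent_generator M D U" "M *v (M *v x) = 0"
  shows "U t *v x = x + t *s (M *v x)"
  using nilpotent_generator_apply[OF assms(1), of 2] assms(2)
  by (simp add: numeral_2_eq_2 matrix_vector_mul_assoc)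

lemma nilpotent_generator_matpow_commute:
  assumes "nilpotent_generator M D U"
  shows "U t *v (matpow M k *v x) = matpow M k *v (U t *v x)"
proof -
  have series: "U t *v y = (\<Sum>j<D. (t^j / fact j) *s (matpow M j *v y))" for y
    using assms unfolding nilpotent_generator_def by simp
  have "matpow M j *v (matpow M k *v x) = matpow M k *v (matpow M j *v x)" for j
    by (simp add: matrix_vector_mul_assoc matpow_commute)
  then show ?thesis by (simp add: series vec.sum vec.scale)
qed

lemma nilpotent_generator_commute:
  assumes gen: "nilpotent_generator M D U"
    and comm: "\<And>t. B *v (U t *v x) = U t *v (B *v x)"
  shows "B *v (matpow M k *v x) = matpow M k *v (B *v x)"
proof (cases "k < D")
  case True
  have series: "U t *v y = (\<Sum>k<D. (t^k / fact k) *s (matpow M k *v y))" for t y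
    using gen unfolding nilpotent_generator_def by simp
  have "(1 / fact k) *s (B *v (matpow M k *v x)) = (1 / fact k) *s (matpow M k *v (B *v x))"
  proof (rule vector_polyfun_eq_coeffs[OF _ True])
    fix t
    show "(\<Sum>k<D. t^k *s ((1 / fact k) *s (B *v (matpow M k *v x))))
            = (\<Sum>k<D. t^k *s ((1 / fact k) *s (matpow M k *v (B *v x))))"
      using comm[of t] by (simp add: series vec.sum vec.scale vector_smult_assoc)
  qed
  then show ?thesis by simp
next
  case False
  then have "matpow M k = 0"
    using gen matpow_add[of M "k - D" D] unfolding nilpotent_generator_def by simp
  then show ?thesis by simp
qed

lemma nilpotent_generator_eigenvector:
  assumes gen: "nilpotent_generator M D U" and eigen: "U 1 *v u = c *s u"
  shows "M *v u = 0"
proof (rule ccontr)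
  assume "M *v u \<noteq> 0"
  moreover have "matpow M D = 0"
    using gen unfolding nilpotent_generator_def by simp
  ultimately obtain k where
    nonzero: "matpow M k *v (M *v u) \<noteq> 0" and zero: "M *v (matpow M k *v (M *v u)) = 0"
    using matpow_last_nonzero by blast
  define v where "v = matpow M k *v u"
  have Mv: "M *v v = matpow M k *v (M *v u)"
    by (simp add: v_def matrix_vector_mul_assoc matpow_Suc_right[symmetric])
  \<comment> \<open>on \<open>v\<close> the operator \<open>U 1 = 1 + M\<close> is a nontrivial Jordan block, yet \<open>v\<close> is an eigenvector\<close>
  have "v + M *v v = c *s v"
    using nilpotent_generator_square_zero[OF gen, of v 1] zero Mv eigen
    by (simp add: v_def nilpotent_generator_matpow_commute[OF gen] vec.scale)
  then have "M *v v + M *v (M *v v) = c *s (M *v v)"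
    by (metis vec.add vec.scale)
  then have "1 *s (M *v v) = c *s (M *v v)"
    using zero Mv by simp
  then have "1 = c \<or> M *v v = 0"
    by (simp only: vector_mul_rcancel)
  then have "c = 1"
    using nonzero Mv by auto
  then show False
    using \<open>v + M *v v = c *s v\<close> nonzero Mv by simp
qed

lemma nilpotent_generator_fixed_vector:
  assumes gen: "nilpotent_generator M D U" and "y \<noteq> 0"
  obtains k where "matpow M k *v y \<noteq> 0" "\<And>t. U t *v (matpow M k *v y) = matpow M k *v y"
proof -
  have "matpow M D = 0"
    using gen unfolding nilpotent_generator_def by simp
  then show ?thesis
    using matpow_last_nonzero[OF _ \<open>y \<noteq> 0\<close>] nilpotent_generator_fixes[OF gen] that by metis
qed

text \<open>A form of Kolchin's theorem, in which the groups need only commute on the range of \<open>N\<close>.\<close>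
lemma common_fixed_vector_in_range:
  fixes U :: "'j \<Rightarrow> complex \<Rightarrow> complex^'n^'n" and N :: "complex^'n^'n"
  assumes "finite F"
    and gen: "\<And>j. j \<in> F \<Longrightarrow> \<exists>M D. nilpotent_generator M D (U j)"
    and intertwine: "\<And>j t x. j \<in> F \<Longrightarrow> N *v (U j t *v x) = U j t *v (N *v x)"
    and comm: "\<And>i j s t x. i \<in> F \<Longrightarrow> j \<in> F \<Longrightarrow>
                 U i s *v (U j t *v (N *v x)) = U j t *v (U i s *v (N *v x))"
    and "N *v z \<noteq> 0"
  shows "\<exists>z'. N *v z' \<noteq> 0 \<and> (\<forall>j\<in>F. \<forall>t. U j t *v (N *v z') = N *v z')"
proof -
  have "finite G \<Longrightarrow> G \<subseteq> F \<Longrightarrow>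
          \<exists>z'. N *v z' \<noteq> 0 \<and> (\<forall>j\<in>G. \<forall>t. U j t *v (N *v z') = N *v z')" for G
  proof (induction G rule: finite_induct)
    case empty
    then show ?case using \<open>N *v z \<noteq> 0\<close> by blast
  next
    case (insert j G)
    then obtain z1 where z1: "N *v z1 \<noteq> 0" "\<And>i t. i \<in> G \<Longrightarrow> U i t *v (N *v z1) = N *v z1"
      by auto
    have j: "j \<in> F" using insert.prems by simp
    obtain M D where M: "nilpotent_generator M D (U j)"
      using gen[OF j] by blast
    obtain k where k: "matpow M k *v (N *v z1) \<noteq> 0"
      "\<And>t. U j t *v (matpow M k *v (N *v z1)) = matpow M k *v (N *v z1)"
      using nilpotent_generator_fixed_vector[OF M z1(1)] by blast
    have N_z2: "N *v (matpow M k *v z1) = matpow M k *v (N *v z1)"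
      by (rule nilpotent_generator_commute[OF M intertwine[OF j]])
    have "U i s *v (matpow M k *v (N *v z1)) = matpow M k *v (N *v z1)" if "i \<in> G" for i s
    proof -
      have "U i s *v (matpow M k *v (N *v z1)) = matpow M k *v (U i s *v (N *v z1))"
        by (rule nilpotent_generator_commute[OF M comm]) (use that insert.prems j in auto)
      then show ?thesis using z1(2)[OF that] by simp
    qed
    then show ?case
      using k N_z2 by (intro exI[of _ "matpow M k *v z1"]) auto
  qed
  then show ?thesis using \<open>finite F\<close> by blast
qed

section \<open>Projective points and Zariski closure\<close>

lemma vpoly_const: "(\<lambda>x. c) \<in> vpoly"
  unfolding vpoly_def by (rule poly_gen.const)

lemma vpoly_coord: "(\<lambda>x. x $ i) \<in> vpoly"
  unfolding vpoly_def by (rule poly_gen.gen) auto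

lemma vpoly_add: "f \<in> vpoly \<Longrightarrow> g \<in> vpoly \<Longrightarrow> (\<lambda>x. f x + g x) \<in> vpoly"
  unfolding vpoly_def by (rule poly_gen.add)

lemma vpoly_mult: "f \<in> vpoly \<Longrightarrow> g \<in> vpoly \<Longrightarrow> (\<lambda>x. f x * g x) \<in> vpoly"
  unfolding vpoly_def by (rule poly_gen.mult)

lemma vpoly_diff:
  assumes "f \<in> vpoly" "g \<in> vpoly"
  shows "(\<lambda>x. f x - g x) \<in> vpoly"
proof -
  have "(\<lambda>x. f x + (-1) * g x) \<in> vpoly"
    by (intro vpoly_add vpoly_mult vpoly_const assms)
  then show ?thesis by simp
qed

lemma vpoly_sum:
  "finite S \<Longrightarrow> (\<And>k. k \<in> S \<Longrightarrow> f k \<in> vpoly) \<Longrightarrow> (\<lambda>x. \<Sum>k\<in>S. f k x) \<in> vpoly"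
proof (induction S rule: finite_induct)
  case empty
  then show ?case using vpoly_const[of 0] by simp
next
  case (insert a S)
  then have "(\<lambda>x. f a x + (\<Sum>k\<in>S. f k x)) \<in> vpoly" by (intro vpoly_add) auto
  then show ?case using insert by simp
qed

lemma vpoly_matrix_vector_component: "(\<lambda>x. (A *v x) $ i) \<in> vpoly"
proof -
  have "(\<lambda>x. \<Sum>j\<in>UNIV. A $ i $ j * x $ j) \<in> vpoly"
    by (rule vpoly_sum) (auto intro: vpoly_mult vpoly_const vpoly_coord)
  then show ?thesis by (simp add: matrix_vector_mult_def)
qed

lemma vpoly_scale_arg:
  assumes "p \<in> vpoly"
  shows "(\<lambda>x. p (c *s x)) \<in> vpoly"
  using assms unfolding vpoly_def
proof induction
  case (gen f)
  then obtain i where "f = (\<lambda>x. x $ i)" by auto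
  then show ?case
    using vpoly_mult[OF vpoly_const vpoly_coord, of c i] by (simp add: vpoly_def)
qed (auto intro: poly_gen.intros)

lemma pline_self: "u \<in> pline u"
  unfolding pline_def by (auto intro: exI[of _ 1])

lemma pline_eqD: "pline u = pline v \<Longrightarrow> \<exists>c. v = c *s u"
  using pline_self[of v] unfolding pline_def by auto

lemma pline_scale:
  assumes "c \<noteq> 0"
  shows "pline (c *s u) = pline u"
proof -
  have "x \<in> pline (c *s u) \<longleftrightarrow> x \<in> pline u" for x
  proof
    assume "x \<in> pline (c *s u)"
    then obtain d where "x = d *s (c *s u)" unfolding pline_def by blast
    then show "x \<in> pline u" unfolding pline_def by (auto simp: vector_smult_assoc)
  next
    assume "x \<in> pline u"
    then obtain d where "x = d *s u" unfolding pline_def by blast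
    then have "x = (d / c) *s (c *s u)" using assms by (simp add: vector_smult_assoc)
    then show "x \<in> pline (c *s u)" unfolding pline_def by blast
  qed
  then show ?thesis by blast
qed

lemma pact_pline: "pact \<rho> g (pline u) = pline (\<rho> g *v u)"
  unfolding pact_def pline_def by (auto simp: vec.scale[symmetric] intro!: image_eqI)

lemma PV_E:
  assumes "L \<in> PV"
  obtains u where "u \<noteq> 0" "L = pline u"
  using assms unfolding PV_def by auto

lemma zcl_E:
  assumes "p \<in> zcl S"
  obtains x where "x \<noteq> 0" "p = pline x"
  using assms unfolding zcl_def by auto

lemma zcl_vanishing:
  assumes "pline x \<in> zcl S" "S \<subseteq> range pline" "p \<in> vpoly" "\<forall>L\<in>S. \<forall>y\<in>L. p y = 0"
  shows "p x = 0"
proof -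
  obtain u where u: "pline x = pline u"
    "\<forall>q\<in>vpoly. (\<forall>L\<in>S. \<forall>y\<in>L. q y = 0) \<longrightarrow> q u = 0"
    using assms(1) unfolding zcl_def by auto
  obtain c where x: "x = c *s u"
    using pline_eqD[OF u(1)[symmetric]] by blast
  \<comment> \<open>the vanishing ideal of a cone is stable under scaling, so \<open>p\<close> need not be homogeneous\<close>
  have "\<forall>L\<in>S. \<forall>y\<in>L. p (c *s y) = 0"
  proof (intro ballI)
    fix L y assume "L \<in> S" "y \<in> L"
    then obtain v d where "L = pline v" "y = d *s v"
      using assms(2) unfolding pline_def by blast
    then have "c *s y \<in> L"
      unfolding pline_def by (auto simp: vector_smult_assoc)
    then show "p (c *s y) = 0"
      using assms(4) \<open>L \<in> S\<close> by blast
  qed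
  then have "p (c *s u) = 0"
    using u(2)[rule_format, OF vpoly_scale_arg[OF assms(3), of c]] by simp
  then show ?thesis using x by simp
qed

lemma zcl_unipotent_line_orbit_in_plane:
  fixes A :: "complex^'n^'n" and u :: "complex^'n"
  defines "w \<equiv> A *v u"
  assumes "A *v w = 0" "w \<noteq> 0"
    and "pline x \<in> zcl {pline (u + t *s w) | t. True}"
  shows "\<exists>a b. x = a *s u + b *s w"
proof -
  obtain i0 where i0: "w $ i0 \<noteq> 0"
    using \<open>w \<noteq> 0\<close> by (auto simp: vec_eq_iff)
  define l where "l y = (A *v y) $ i0" for y
  have l_u: "l u = w $ i0"
    by (simp add: l_def w_def)
  \<comment> \<open>the vector \<open>l u \<cdot> y - l y \<cdot> u\<close> is a multiple of \<open>w\<close> on the orbit; these \<open>2 \<times> 2\<close> minors say so\<close>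
  define minor where
    "minor i y = (l u * y $ i - l y * u $ i) * w $ i0 - (l u * y $ i0 - l y * u $ i0) * w $ i" for i y
  have "minor i x = 0" for i
  proof (rule zcl_vanishing[OF assms(4)])
    show "{pline (u + t *s w) | t. True} \<subseteq> range pline" by blast
    show "minor i \<in> vpoly"
      unfolding minor_def[abs_def] l_def
      by (intro vpoly_diff vpoly_mult vpoly_const vpoly_coord vpoly_matrix_vector_component)
    show "\<forall>L\<in>{pline (u + t *s w) | t. True}. \<forall>y\<in>L. minor i y = 0"
    proof (intro ballI)
      fix L y assume "L \<in> {pline (u + t *s w) | t. True}" "y \<in> L"
      then obtain c t where y: "y = c *s (u + t *s w)"
        unfolding pline_def by blast
      have "l y = c * l u"
        using \<open>A *v w = 0\<close> by (simp add: y l_def vec.scale vec.add)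
      then show "minor i y = 0"
        by (simp add: minor_def y algebra_simps)
    qed
  qed
  define \<beta> where "\<beta> = (l u * x $ i0 - l x * u $ i0) / w $ i0"
  have "l u * x $ i - l x * u $ i = \<beta> * w $ i" for i
    using \<open>minor i x = 0\<close> i0 by (simp add: minor_def \<beta>_def field_simps)
  then have "x = (l x / l u) *s u + (\<beta> / l u) *s w"
    using i0 l_u by (simp add: vec_eq_iff field_simps)
  then show ?thesis by blast
qed

lemma zcl_unipotent_line_orbit_boundary:
  fixes A :: "complex^'n^'n" and u :: "complex^'n"
  defines "w \<equiv> A *v u"
  assumes "A *v w = 0" "w \<noteq> 0"
    and "zcl {pline (u + t *s w) | t. True} - {pline (u + t *s w) | t. True} = {p}"
  shows "p = pline w"
proof -
  have "p \<in> zcl {pline (u + t *s w) | t. True}" and p_new: "p \<notin> {pline (u + t *s w) | t. True}"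
    using assms(4) by auto
  then obtain x where x: "x \<noteq> 0" "p = pline x"
    by (auto elim: zcl_E)
  then obtain a b where ab: "x = a *s u + b *s w"
    using zcl_unipotent_line_orbit_in_plane assms(2,3) \<open>p \<in> zcl _\<close> unfolding w_def by blast
  have "a = 0"
  proof (rule ccontr)
    assume "a \<noteq> 0"
    then have x_on_orbit: "x = a *s (u + (b / a) *s w)"
      by (simp add: ab vector_smult_assoc vec_eq_iff algebra_simps)
    have "p = pline (u + (b / a) *s w)"
      by (simp only: x(2) x_on_orbit pline_scale[OF \<open>a \<noteq> 0\<close>])
    with p_new show False by blast
  qed
  then have "b \<noteq> 0" "x = b *s w"
    using ab x(1) by auto
  then show ?thesis
    using x(2) pline_scale by simp
qed

section \<open>Heisenberg structures whose centre fixes the boundary\<close>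

lemma hpoly_restrict_line:
  assumes "f \<in> hpoly"
  shows "\<exists>p. \<forall>t. f (t *s a, t * c) = poly p t"
  using assms unfolding hpoly_def
proof induction
  case (gen f)
  then consider i where "f = (\<lambda>g. fst g $ i)" | "f = snd"
    by auto
  then show ?case
  proof cases
    case (1 i)
    then show ?thesis by (intro exI[of _ "[:0, a $ i:]"]) (simp add: mult.commute)
  next
    case 2
    then show ?thesis by (intro exI[of _ "[:0, c:]"]) (simp add: mult.commute)
  qed
next
  case (const c)
  then show ?case by (intro exI[of _ "[:c:]"]) simp
next
  case (add f g)
  then obtain p q where "\<forall>t. f (t *s a, t * c) = poly p t" "\<forall>t. g (t *s a, t * c) = poly q t"
    by blast
  then show ?case by (intro exI[of _ "p + q"]) simp
next
  case (mult f g)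
  then obtain p q where "\<forall>t. f (t *s a, t * c) = poly p t" "\<forall>t. g (t *s a, t * c) = poly q t"
    by blast
  then show ?case by (intro exI[of _ "p * q"]) simp
qed

lemma symplectic_form_isotropic_line:
  assumes "symplectic_form \<omega>"
  shows "\<omega> (s *s w) (t *s w) = 0"
proof -
  have lin: "\<omega> (a *s x) z = a * \<omega> x z" for a x z
    using assms unfolding symplectic_form_def by (metis add.right_neutral mult_zero_left vector_smult_lzero)
  have skew: "\<omega> x y = - \<omega> y x" for x y
    using assms unfolding symplectic_form_def by blast
  have "\<omega> (s *s w) (t *s w) = - (s * t) * \<omega> w w"
    using skew[of w "t *s w"] by (simp add: lin)
  moreover have "\<omega> w w = 0"
    using skew[of w w] by simp
  ultimately show ?thesis by simp
qed

lemma heis_line_nilpotent_generator: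
  assumes "symplectic_form \<omega>" "heis_structure \<omega> \<rho> \<Omega>"
  shows "\<exists>M D. nilpotent_generator M D (\<lambda>t. \<rho> (t *s w, t * c))"
proof (rule polynomial_one_parameter_group_generator)
  have "hmul \<omega> (s *s w, s * c) (t *s w, t * c) = ((s + t) *s w, (s + t) * c)" for s t
    using symplectic_form_isotropic_line[OF assms(1)]
    by (simp add: hmul_def vector_sadd_rdistrib distrib_right)
  then show "\<rho> ((s + t) *s w, (s + t) * c) = \<rho> (s *s w, s * c) ** \<rho> (t *s w, t * c)" for s t
    using assms(2) unfolding heis_structure_def by metis
  show "\<rho> (0 *s w, 0 * c) = mat 1"
    using assms(2) unfolding heis_structure_def by simp
  show "\<exists>p. \<forall>t. \<rho> (t *s w, t * c) $ i $ j = poly p t" for i j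
    using assms(2) hpoly_restrict_line[of "\<lambda>g. \<rho> g $ i $ j"] unfolding heis_structure_def by blast
qed

locale heis_structure_fixing_boundary =
  fixes \<omega> :: "complex^'w::finite \<Rightarrow> complex^'w \<Rightarrow> complex"
    and \<rho> :: "(complex^'w) \<times> complex \<Rightarrow> complex^'v::finite^'v"
    and \<Omega> :: "(complex^'v) set set"
    and z0 :: "complex^'v"
    and N :: "complex^'v^'v"
    and D :: nat
  assumes symplectic: "symplectic_form \<omega>"
    and heis: "heis_structure \<omega> \<rho> \<Omega>"
    and boundary_fixed: "\<forall>L \<in> PV - \<Omega>. pact \<rho> (0, 1) L = L"
    and base_point: "z0 \<noteq> 0" "\<Omega> = {pline (\<rho> g *v z0) | g. True}"
    and center_generator: "nilpotent_generator N D (\<lambda>t. \<rho> (0, t))"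
begin

lemma rho_mult: "\<rho> (hmul \<omega> g h) = \<rho> g ** \<rho> h"
  using heis unfolding heis_structure_def by blast

lemma rho_zero [simp]: "\<rho> (0, 0) = mat 1"
  using heis unfolding heis_structure_def by blast

lemma effective: "(\<forall>L\<in>PV. pact \<rho> g L = L) \<Longrightarrow> g = (0, 0)"
  using heis unfolding heis_structure_def by blast

lemma Omega_subset_PV: "\<Omega> \<subseteq> PV"
  using heis unfolding heis_structure_def zopen_def by blast

lemma Omega_dense: "zcl \<Omega> = PV"
  using heis unfolding heis_structure_def by blast

lemma omega_zero [simp]: "\<omega> x 0 = 0" "\<omega> 0 x = 0"
  using symplectic_form_isotropic_line[OF symplectic, of 1 x 0]
    symplectic_form_isotropic_line[OF symplectic, of 0 x 1] by simp_all

lemma rho_matpow_N_commute: "\<rho> g *v (matpow N k *v x) = matpow N k *v (\<rho> g *v x)"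
proof (rule nilpotent_generator_commute[OF center_generator])
  have "hmul \<omega> g (0, t) = hmul \<omega> (0, t) g" for t
    by (simp add: hmul_def)
  then show "\<rho> g *v (\<rho> (0, t) *v x) = \<rho> (0, t) *v (\<rho> g *v x)" for t
    by (simp add: matrix_vector_mul_assoc flip: rho_mult)
qed

lemma rho_N_commute: "\<rho> g *v (N *v x) = N *v (\<rho> g *v x)"
  using rho_matpow_N_commute[of g 1 x] by simp

lemma rho_injective:
  assumes "\<rho> g *v x = 0"
  shows "x = 0"
proof -
  obtain w s where g: "g = (w, s)" by force
  have "\<omega> (- w) w = 0"
    using symplectic_form_isotropic_line[OF symplectic, of "-1" w 1]
    by (metis vector_sneg_minus1 vector_smult_lid)
  then have "hmul \<omega> (- w, - s) g = (0, 0)"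
    by (simp add: g hmul_def)
  then have "\<rho> (- w, - s) ** \<rho> g = mat 1"
    by (metis rho_mult rho_zero)
  then have "\<rho> (- w, - s) *v (\<rho> g *v x) = x"
    by (simp add: matrix_vector_mul_assoc)
  with assms show ?thesis by simp
qed

lemma Omega_E:
  assumes "pline u \<in> \<Omega>" "u \<noteq> 0"
  obtains g c where "c \<noteq> 0" "u = c *s (\<rho> g *v z0)"
proof -
  obtain g where "pline u = pline (\<rho> g *v z0)"
    using assms(1) base_point(2) by blast
  then obtain c where u: "u = c *s (\<rho> g *v z0)"
    using pline_eqD by metis
  moreover from u assms(2) have "c \<noteq> 0" by auto
  ultimately show ?thesis using that by blast
qed

lemma matpow_N_Omega_iff:
  assumes "pline u \<in> \<Omega>" "u \<noteq> 0"
  shows "matpow N k *v u = 0 \<longleftrightarrow> matpow N k *v z0 = 0"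
proof -
  obtain g c where "c \<noteq> 0" "u = c *s (\<rho> g *v z0)"
    using Omega_E[OF assms] .
  then show ?thesis
    using rho_injective[of g "matpow N k *v z0"] by (auto simp: vec.scale simp flip: rho_matpow_N_commute)
qed

lemma N_base_point: "N *v z0 \<noteq> 0"
proof
  \<comment> \<open>otherwise \<open>N\<close> vanishes on the dense orbit, hence everywhere, and the centre acts trivially\<close>
  assume N_z0: "N *v z0 = 0"
  have N_Omega: "(N *v y) $ i = 0" if L: "L \<in> \<Omega>" and y: "y \<in> L" for L y i
  proof -
    obtain g where "L = pline (\<rho> g *v z0)"
      using L base_point(2) by blast
    with y obtain c where "y = c *s (\<rho> g *v z0)"
      unfolding pline_def by blast
    then show ?thesis by (simp add: N_z0 vec.scale flip: rho_N_commute)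
  qed
  have "(N *v v) $ i = 0" if "v \<noteq> 0" for v i
  proof (rule zcl_vanishing[where p = "\<lambda>x. (N *v x) $ i"])
    show "pline v \<in> zcl \<Omega>"
      using Omega_dense that by (auto simp: PV_def)
    show "\<Omega> \<subseteq> range pline"
      using Omega_subset_PV by (auto simp: PV_def)
  qed (use N_Omega in \<open>auto intro: vpoly_matrix_vector_component\<close>)
  then have "N *v v = 0" for v
    by (cases "v = 0") (simp_all add: vec_eq_iff[of "N *v v"])
  then have "pact \<rho> (0, 1) L = L" if "L \<in> PV" for L
    using that nilpotent_generator_fixes[OF center_generator]
    by (auto simp: pact_pline elim: PV_E)
  then have "(0, 1) = ((0::complex^'w), (0::complex))"
    using effective by blast
  then show False by simp
qed

lemma boundary_in_kernel:
  assumes "u \<noteq> 0" "pline u \<notin> \<Omega>"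
  shows "N *v u = 0"
proof -
  have "pline u \<in> PV - \<Omega>"
    using assms unfolding PV_def by auto
  then have "pline (\<rho> (0, 1) *v u) = pline u"
    using boundary_fixed by (metis pact_pline)
  then obtain c where "\<rho> (0, 1) *v u = c *s u"
    using pline_eqD by metis
  then show ?thesis
    by (rule nilpotent_generator_eigenvector[OF center_generator])
qed

lemma Omega_iff_N:
  assumes "u \<noteq> 0"
  shows "pline u \<in> \<Omega> \<longleftrightarrow> N *v u \<noteq> 0"
  using matpow_N_Omega_iff[OF _ assms, of 1] N_base_point boundary_in_kernel[OF assms] by auto

text \<open>\<open>\<Omega>\<close> is a single orbit, so the order of nilpotency of \<open>N\<close> at its points is constant,
  while \<open>u\<close> and \<open>N u\<close> would both lie in \<open>\<Omega>\<close> with different orders.\<close>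
lemma N_square_zero: "N *v (N *v u) = 0"
proof (rule ccontr)
  assume NN_u: "N *v (N *v u) \<noteq> 0"
  then have N_u: "N *v u \<noteq> 0" and u: "u \<noteq> 0" by auto
  have "matpow N D = 0"
    using center_generator unfolding nilpotent_generator_def by simp
  then obtain k where k: "matpow N k *v u \<noteq> 0" "N *v (matpow N k *v u) = 0"
    using matpow_last_nonzero[OF _ u] by blast
  have "matpow N k *v z0 \<noteq> 0"
    using k(1) matpow_N_Omega_iff Omega_iff_N u N_u by blast
  moreover have "matpow N k *v (N *v u) = 0"
    using k(2) by (simp add: matrix_vector_mul_assoc flip: matpow.simps(2) matpow_Suc_right)
  then have "matpow N k *v z0 = 0"
    using matpow_N_Omega_iff Omega_iff_N N_u NN_u by blast
  ultimately show False by simp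
qed

lemma center_action: "\<rho> (0, t) *v u = u + t *s (N *v u)"
  by (rule nilpotent_generator_square_zero[OF center_generator N_square_zero])

lemma center_orbit_limit_point:
  assumes "N *v u \<noteq> 0"
    and "zcl (center_orbit \<rho> (pline u)) - center_orbit \<rho> (pline u) = {p}"
  shows "p = pline (N *v u)"
proof -
  have "center_orbit \<rho> (pline u) = {pline (u + t *s (N *v u)) | t. True}"
    unfolding center_orbit_def by (simp add: pact_pline center_action)
  then show ?thesis
    using zcl_unipotent_line_orbit_boundary[of N u p] N_square_zero assms by simp
qed

lemma translations_add_on_kernel:
  assumes "N *v y = 0"
  shows "\<rho> (a, 0) *v (\<rho> (b, 0) *v y) = \<rho> (a + b, 0) *v y"
proof -
  have "\<rho> (a, 0) ** \<rho> (b, 0) = \<rho> (a + b, 0) ** \<rho> (0, \<omega> a b / 2)"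
    by (simp add: hmul_def flip: rho_mult)
  then have "\<rho> (a, 0) *v (\<rho> (b, 0) *v y) = \<rho> (a + b, 0) *v (\<rho> (0, \<omega> a b / 2) *v y)"
    by (simp add: matrix_vector_mul_assoc)
  then show ?thesis
    using assms by (simp add: center_action)
qed

lemma kernel_vector_fixed:
  assumes "N *v y = 0" and fixed: "\<And>j t. \<rho> (t *s axis j 1, 0) *v y = y"
  shows "\<rho> g *v y = y"
proof -
  have "\<rho> (\<Sum>j\<in>J. w $ j *s axis j 1, 0) *v y = y" if "finite J" for J w
    using that
  proof (induction J rule: finite_induct)
    case (insert j J)
    have "\<rho> (\<Sum>i\<in>insert j J. w $ i *s axis i 1, 0) *v y
            = \<rho> (w $ j *s axis j 1 + (\<Sum>i\<in>J. w $ i *s axis i 1), 0) *v y"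
      by (simp only: sum.insert[OF insert(1,2)])
    also have "\<dots> = \<rho> (w $ j *s axis j 1, 0) *v (\<rho> (\<Sum>i\<in>J. w $ i *s axis i 1, 0) *v y)"
      by (rule translations_add_on_kernel[OF assms(1), symmetric])
    finally show ?case
      by (simp only: insert.IH fixed)
  qed simp
  then have translation: "\<rho> (w, 0) *v y = y" for w
    using basis_expansion[of w] by (metis finite)
  obtain w s where g: "g = (w, s)" by force
  have "\<rho> g = \<rho> (w, 0) ** \<rho> (0, s)"
    by (simp add: g hmul_def flip: rho_mult)
  then have "\<rho> g *v y = \<rho> (w, 0) *v (\<rho> (0, s) *v y)"
    by (simp add: matrix_vector_mul_assoc)
  also have "\<dots> = \<rho> (w, 0) *v y"
    using center_action[of s y] assms(1) by simp
  also have "\<dots> = y"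
    by (rule translation)
  finally show ?thesis .
qed

lemma fixed_vector_in_range_N:
  obtains z where "N *v z \<noteq> 0" "\<And>g. \<rho> g *v (N *v z) = N *v z"
proof -
  have "\<exists>z. N *v z \<noteq> 0 \<and> (\<forall>j\<in>UNIV. \<forall>t. \<rho> (t *s axis j 1, 0) *v (N *v z) = N *v z)"
  proof (rule common_fixed_vector_in_range[OF finite_class.finite_UNIV _ _ _ N_base_point])
    show "\<exists>M D. nilpotent_generator M D (\<lambda>t. \<rho> (t *s axis j 1, 0))" for j
      using heis_line_nilpotent_generator[OF symplectic heis, of "axis j 1" 0] by simp
    show "N *v (\<rho> (t *s axis j 1, 0) *v x) = \<rho> (t *s axis j 1, 0) *v (N *v x)" for j t x
      by (rule rho_N_commute[symmetric])
    fix i j s t x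
    have "\<rho> (s *s axis i 1, 0) *v (\<rho> (t *s axis j 1, 0) *v (N *v x))
            = \<rho> (s *s axis i 1 + t *s axis j 1, 0) *v (N *v x)"
      by (rule translations_add_on_kernel[OF N_square_zero])
    also have "\<dots> = \<rho> (t *s axis j 1, 0) *v (\<rho> (s *s axis i 1, 0) *v (N *v x))"
      by (metis add.commute translations_add_on_kernel[OF N_square_zero])
    finally show "\<rho> (s *s axis i 1, 0) *v (\<rho> (t *s axis j 1, 0) *v (N *v x))
                    = \<rho> (t *s axis j 1, 0) *v (\<rho> (s *s axis i 1, 0) *v (N *v x))" .
  qed
  then obtain z where z: "N *v z \<noteq> 0" "\<And>j t. \<rho> (t *s axis j 1, 0) *v (N *v z) = N *v z"
    by blast
  show ?thesis
    by (rule that[OF z(1) kernel_vector_fixed[OF N_square_zero z(2)]])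
qed

lemma N_base_point_fixed: "\<rho> g *v (N *v z0) = N *v z0"
proof -
  obtain z where z: "N *v z \<noteq> 0" "\<And>g. \<rho> g *v (N *v z) = N *v z"
    using fixed_vector_in_range_N by blast
  \<comment> \<open>\<open>z\<close> and \<open>z0\<close> lie in one orbit, so \<open>N z0\<close> is a multiple of the fixed vector \<open>N z\<close>\<close>
  then have "z \<noteq> 0" by auto
  then obtain h a where a: "a \<noteq> 0" "z = a *s (\<rho> h *v z0)"
    using Omega_E Omega_iff_N z(1) by metis
  have "N *v z = a *s (\<rho> h *v (N *v z0))"
    by (simp add: a(2) vec.scale flip: rho_N_commute)
  then have "\<rho> h *v (a *s (N *v z0)) = N *v z"
    by (simp add: vec.scale)
  then have "\<rho> h *v (a *s (N *v z0) - N *v z) = 0"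
    by (simp add: vec.diff z(2))
  then have a_N_z0: "a *s (N *v z0) = N *v z"
    using rho_injective[of h] by (metis eq_iff_diff_eq_0)
  have "a *s (\<rho> g *v (N *v z0)) = \<rho> g *v (a *s (N *v z0))"
    by (rule vec.scale[symmetric])
  also have "\<dots> = N *v z"
    by (simp only: a_N_z0 z(2))
  also have "\<dots> = a *s (N *v z0)"
    by (rule a_N_z0[symmetric])
  finally show ?thesis
    using a(1) by simp
qed

lemma center_orbit_limit_point_base:
  assumes "q \<in> \<Omega>" "zcl (center_orbit \<rho> q) - center_orbit \<rho> q = {p}"
  shows "p = pline (N *v z0)"
proof -
  obtain u where u: "u \<noteq> 0" "q = pline u"
    using assms(1) Omega_subset_PV by (blast elim: PV_E)
  then obtain g c where c: "c \<noteq> 0" "u = c *s (\<rho> g *v z0)"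
    using Omega_E assms(1) by blast
  have N_u: "N *v u = c *s (N *v z0)"
    by (simp add: c(2) vec.scale N_base_point_fixed flip: rho_N_commute)
  have "p = pline (N *v u)"
    using center_orbit_limit_point Omega_iff_N u assms by blast
  then show ?thesis
    using N_u pline_scale[OF c(1)] by simp
qed

end

theorem lemma2p5:
  fixes n :: nat
    and \<omega> :: "complex^'w::finite \<Rightarrow> complex^'w \<Rightarrow> complex"
    and \<rho> :: "(complex^'w) \<times> complex \<Rightarrow> complex^'v::finite^'v"
    and \<Omega> :: "(complex^'v) set set"
  assumes "n \<ge> 1"
    and "CARD('w) = 2 * n"
    and "CARD('v) = 2 * n + 2"
    and "symplectic_form \<omega>"
    and "heis_structure \<omega> \<rho> \<Omega>"
    and "\<forall>L \<in> PV - \<Omega>. pact \<rho> (0, 1) L = L"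
  shows "\<forall>q\<in>\<Omega>. \<forall>q'\<in>\<Omega>. \<forall>p p'.
           zcl (center_orbit \<rho> q) - center_orbit \<rho> q = {p} \<longrightarrow>
           zcl (center_orbit \<rho> q') - center_orbit \<rho> q' = {p'} \<longrightarrow> p = p'"
proof -
  obtain x0 where x0: "x0 \<in> PV" "\<Omega> = {pact \<rho> g x0 | g. True}"
    using assms(5) unfolding heis_structure_def by blast
  then obtain z0 where z0: "z0 \<noteq> 0" "x0 = pline z0"
    by (blast elim: PV_E)
  have Omega: "\<Omega> = {pline (\<rho> g *v z0) | g. True}"
    using x0(2) by (simp add: z0(2) pact_pline)
  obtain N D where "nilpotent_generator N D (\<lambda>t. \<rho> (0, t))"
    using heis_line_nilpotent_generator[OF assms(4,5), of 0 1] by auto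
  then interpret heis_structure_fixing_boundary \<omega> \<rho> \<Omega> z0 N D
    using assms(4-6) z0(1) Omega by unfold_locales
  show ?thesis
  proof (intro ballI allI impI)
    fix q q' p p'
    assume "q \<in> \<Omega>" "q' \<in> \<Omega>"
      and "zcl (center_orbit \<rho> q) - center_orbit \<rho> q = {p}"
      and "zcl (center_orbit \<rho> q') - center_orbit \<rho> q' = {p'}"
    then show "p = p'"
      using center_orbit_limit_point_base by metis
  qed
qed

end
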